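(* Let $\mu,\nu\in\mathbb{R}$. The double inequality $$\frac{x^2+\mu x+12}{12x^4(x+1)^2}<[\psi'(x)]^2+\psi''(x)<\frac{x^2+\nu x+12}{12x^4(x+1)^2}$$ holds for all $x\in(0,\infty)$ if and only if $\mu\le0$ and $\nu\ge4$.
   Context: $\Gamma$ is Euler's gamma function, $\psi=\Gamma'/\Gamma$ is the digamma function, and $\psi',\psi''$ are its first and second derivatives. *)

theory Defs
  imports "HOL-Analysis.Analysis"
begin

end

theory Submission
  imports Defs "HOL-Real_Asymp.Real_Asymp"
begin

text \<open>
  Everything rests on a telescoping principle: if \<open>F x < F (x + 1)\<close> for all \<open>x > 0\<close> and
  \<open>F (x + m) \<rightarrow> 0\<close>, then \<open>F < 0\<close>. Since \<open>\<psi>\<^sup>(\<^sup>n\<^sup>) (x + 1) - \<psi>\<^sup>(\<^sup>n\<^sup>) x = (-1)\<^sup>n n! / x\<^sup>n\<^sup>+\<^sup>1\<close>,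
  the step of \<open>F\<close> is explicit whenever \<open>F\<close> is a polygamma function minus a rational function.
  This gives rational bounds for \<open>\<psi>'\<close> and \<open>\<psi>''\<close> (truncations of their asymptotic
  expansions). For \<open>F = \<psi>'\<^sup>2 + \<psi>'' - R\<close>, with \<open>R\<close> the claimed bound, the step involves
  \<open>\<psi>'(x + 1)\<close> only linearly, and the bounds for \<open>\<psi>'\<close> turn it into a rational function of
  fixed sign; this gives the inequalities for \<open>\<mu> = 0\<close> and \<open>\<nu> = 4\<close>.
  Sharpness: expressed through the coefficient of \<open>x\<close> in the numerator, the upper bound for
  \<open>\<psi>'\<^sup>2 + \<psi>''\<close> tends to \<open>0\<close> as \<open>x \<rightarrow> 0\<close> and the lower bound tends to \<open>4\<close> as \<open>x \<rightarrow> \<infinity>\<close>.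
\<close>

lemma neg_if_shift_increasing_tendsto_zero:
  fixes h :: "real \<Rightarrow> real"
  assumes x: "x > 0"
    and step: "\<And>y. y > 0 \<Longrightarrow> h y < h (y + 1)"
    and lim: "(\<lambda>m. h (x + real m)) \<longlonglongrightarrow> 0"
  shows "h x < 0"
proof -
  have "incseq (\<lambda>m. h (x + real m))"
  proof (rule incseq_SucI)
    fix m
    show "h (x + real m) \<le> h (x + real (Suc m))"
      using step[of "x + real m"] x by (simp add: add_ac)
  qed
  from incseq_le[OF this lim, of 1] have "h (x + 1) \<le> 0" by simp
  with step[OF x] show ?thesis by simp
qed

lemma Polygamma_shift_tendsto_zero:
  assumes x: "(x::real) > 0" and n: "n > 0"
  shows "(\<lambda>m. Polygamma n (x + real m)) \<longlonglongrightarrow> 0"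
proof -
  let ?S = "(-1) ^ Suc n * Polygamma n x / fact n"
  have "(\<lambda>m. \<Sum>k<m. inverse ((x + of_nat k) ^ Suc n)) \<longlonglongrightarrow> ?S"
    using Polygamma_LIMSEQ[of x n] x n by (simp add: sums_def)
  then have "(\<lambda>m. Polygamma n x + (-1) ^ n * fact n * (\<Sum>k<m. inverse ((x + of_nat k) ^ Suc n)))
      \<longlonglongrightarrow> Polygamma n x + (-1) ^ n * fact n * ?S"
    by (intro tendsto_intros)
  moreover have "Polygamma n x + (-1) ^ n * fact n * ?S = 0"
    by (simp add: power_add)
  moreover have "Polygamma n (x + real m)
      = Polygamma n x + (-1) ^ n * fact n * (\<Sum>k<m. inverse ((x + of_nat k) ^ Suc n))" for m
    using Polygamma_plus_of_nat[of m x n] x by (simp add: inverse_eq_divide)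
  ultimately show ?thesis by simp
qed

lemma trigamma_recurrence: "(x::real) > 0 \<Longrightarrow> Polygamma 1 x = Polygamma 1 (x + 1) + 1 / x^2"
  using Polygamma_plus1[of x 1] by (simp add: power2_eq_square)

lemma tetragamma_recurrence: "(x::real) > 0 \<Longrightarrow> Polygamma 2 x = Polygamma 2 (x + 1) - 2 / x^3"
  using Polygamma_plus1[of x 2] by (simp add: numeral_2_eq_2 power3_eq_cube)

definition trigamma_ub :: "real \<Rightarrow> real" where
  "trigamma_ub y = 1/y + 1/(2*y^2) + 1/(6*y^3)"

definition trigamma_lb :: "real \<Rightarrow> real" where
  "trigamma_lb y = trigamma_ub y - 1/(30*y^5)"

definition tetragamma_lb :: "real \<Rightarrow> real" where
  "tetragamma_lb y = -1/y^2 - 1/y^3 - 1/(2*y^4)"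

definition rational_bound :: "real \<Rightarrow> real \<Rightarrow> real" where
  "rational_bound c x = (x^2 + c*x + 12) / (12 * x^4 * (x + 1)^2)"

text \<open>
  In the following identities \<open>x + 1\<close> and \<open>x + 2\<close> are first abstracted to variables, since
  the simplifier cannot see that the denominators it produces from them are nonzero.
\<close>

lemma trigamma_ub_step:
  assumes y: "(y::real) > 0"
  shows "1/y^2 - trigamma_ub y + trigamma_ub (y + 1) = -1 / (6*y^3*(y + 1)^3)"
proof -
  have "1/y^2 - trigamma_ub y + trigamma_ub z = -1 / (6*y^3*z^3)" if z: "z = y + 1" for z
  proof -
    have "y \<noteq> 0" "z \<noteq> 0" using y z by auto
    then show ?thesis unfolding trigamma_ub_def by (simp add: field_simps) (unfold z, algebra)
  qed
  then show ?thesis by simp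
qed

lemma trigamma_lb_step:
  assumes y: "(y::real) > 0"
  shows "1/y^2 - trigamma_lb y + trigamma_lb (y + 1) = (1 + 5*y + 5*y^2) / (30*y^5*(y + 1)^5)"
proof -
  have "1/y^2 - trigamma_lb y + trigamma_lb z = (1 + 5*y + 5*y^2) / (30*y^5*z^5)"
    if z: "z = y + 1" for z
  proof -
    have "y \<noteq> 0" "z \<noteq> 0" using y z by auto
    then show ?thesis
      unfolding trigamma_lb_def trigamma_ub_def by (simp add: field_simps) (unfold z, algebra)
  qed
  then show ?thesis by simp
qed

lemma tetragamma_lb_step:
  assumes y: "(y::real) > 0"
  shows "-2/y^3 - tetragamma_lb y + tetragamma_lb (y + 1) = (1 + 2*y) / (2*y^4*(y + 1)^4)"
proof -
  have "-2/y^3 - tetragamma_lb y + tetragamma_lb z = (1 + 2*y) / (2*y^4*z^4)" if z: "z = y + 1" for z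
  proof -
    have "y \<noteq> 0" "z \<noteq> 0" using y z by auto
    then show ?thesis unfolding tetragamma_lb_def by (simp add: field_simps) (unfold z, algebra)
  qed
  then show ?thesis by simp
qed

lemma rational_bound_4_step_trigamma_ub:
  assumes x: "(x::real) > 0"
  shows "2 * trigamma_ub (x + 1) / x^2 + 1/x^4 - 2/x^3 - rational_bound 4 x + rational_bound 4 (x + 1)
    = -(16*x + 36*x^2 + 32*x^3) / (12*x^4*(x + 1)^4*(x + 2)^2)"
proof -
  have "2 * trigamma_ub z / x^2 + 1/x^4 - 2/x^3 - (x^2 + 4*x + 12) / (12 * x^4 * z^2)
      + (z^2 + 4*z + 12) / (12 * z^4 * w^2) = -(16*x + 36*x^2 + 32*x^3) / (12*x^4*z^4*w^2)"
    if z: "z = x + 1" and w: "w = x + 2" for z w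
  proof -
    have "x \<noteq> 0" "z \<noteq> 0" "w \<noteq> 0" using x z w by auto
    then show ?thesis unfolding trigamma_ub_def by (simp add: field_simps) (unfold z w, algebra)
  qed
  then show ?thesis unfolding rational_bound_def by (simp add: add.assoc)
qed

lemma rational_bound_0_step_trigamma_lb:
  assumes x: "(x::real) > 0"
  shows "2 * trigamma_lb (x + 1) / x^2 + 1/x^4 - 2/x^3 - rational_bound 0 x + rational_bound 0 (x + 1)
    = (44*x^2 + 144*x^3 + 196*x^4 + 100*x^5) / (60*x^4*(x + 1)^5*(x + 2)^2)"
proof -
  have "2 * trigamma_lb z / x^2 + 1/x^4 - 2/x^3 - (x^2 + 12) / (12 * x^4 * z^2)
      + (z^2 + 12) / (12 * z^4 * w^2)
      = (44*x^2 + 144*x^3 + 196*x^4 + 100*x^5) / (60*x^4*z^5*w^2)"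
    if z: "z = x + 1" and w: "w = x + 2" for z w
  proof -
    have "x \<noteq> 0" "z \<noteq> 0" "w \<noteq> 0" using x z w by auto
    then show ?thesis
      unfolding trigamma_lb_def trigamma_ub_def by (simp add: field_simps) (unfold z w, algebra)
  qed
  then show ?thesis unfolding rational_bound_def by (simp add: add.assoc)
qed

lemma trigamma_less_ub:
  assumes x: "(x::real) > 0"
  shows "Polygamma 1 x < trigamma_ub x"
proof -
  have "Polygamma 1 x - trigamma_ub x < 0"
  proof (rule neg_if_shift_increasing_tendsto_zero[where h = "\<lambda>y. Polygamma 1 y - trigamma_ub y", OF x])
    fix y :: real assume y: "y > 0"
    have "0 < 1 / (6*y^3*(y + 1)^3)" using y by simp
    then show "Polygamma 1 y - trigamma_ub y < Polygamma 1 (y + 1) - trigamma_ub (y + 1)"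
      using trigamma_recurrence[OF y] trigamma_ub_step[OF y] by linarith
  next
    have "(\<lambda>m. trigamma_ub (x + real m)) \<longlonglongrightarrow> 0"
      unfolding trigamma_ub_def by real_asymp
    from tendsto_diff[OF Polygamma_shift_tendsto_zero[OF x, of 1] this]
    show "(\<lambda>m. Polygamma 1 (x + real m) - trigamma_ub (x + real m)) \<longlonglongrightarrow> 0" by simp
  qed
  then show ?thesis by simp
qed

lemma trigamma_lb_less:
  assumes x: "(x::real) > 0"
  shows "trigamma_lb x < Polygamma 1 x"
proof -
  have "trigamma_lb x - Polygamma 1 x < 0"
  proof (rule neg_if_shift_increasing_tendsto_zero[where h = "\<lambda>y. trigamma_lb y - Polygamma 1 y", OF x])
    fix y :: real assume y: "y > 0"
    have "0 < (1 + 5*y + 5*y^2) / (30*y^5*(y + 1)^5)" using y by (simp add: add_pos_pos)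
    then show "trigamma_lb y - Polygamma 1 y < trigamma_lb (y + 1) - Polygamma 1 (y + 1)"
      using trigamma_recurrence[OF y] trigamma_lb_step[OF y] by linarith
  next
    have "(\<lambda>m. trigamma_lb (x + real m)) \<longlonglongrightarrow> 0"
      unfolding trigamma_lb_def trigamma_ub_def by real_asymp
    from tendsto_diff[OF this Polygamma_shift_tendsto_zero[OF x, of 1]]
    show "(\<lambda>m. trigamma_lb (x + real m) - Polygamma 1 (x + real m)) \<longlonglongrightarrow> 0" by simp
  qed
  then show ?thesis by simp
qed

lemma tetragamma_lb_less:
  assumes x: "(x::real) > 0"
  shows "tetragamma_lb x < Polygamma 2 x"
proof -
  have "tetragamma_lb x - Polygamma 2 x < 0"
  proof (rule neg_if_shift_increasing_tendsto_zero[where h = "\<lambda>y. tetragamma_lb y - Polygamma 2 y", OF x])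
    fix y :: real assume y: "y > 0"
    have "0 < (1 + 2*y) / (2*y^4*(y + 1)^4)" using y by simp
    then show "tetragamma_lb y - Polygamma 2 y < tetragamma_lb (y + 1) - Polygamma 2 (y + 1)"
      using tetragamma_recurrence[OF y] tetragamma_lb_step[OF y] by linarith
  next
    have "(\<lambda>m. tetragamma_lb (x + real m)) \<longlonglongrightarrow> 0"
      unfolding tetragamma_lb_def by real_asymp
    from tendsto_diff[OF this Polygamma_shift_tendsto_zero[OF x, of 2]]
    show "(\<lambda>m. tetragamma_lb (x + real m) - Polygamma 2 (x + real m)) \<longlonglongrightarrow> 0" by simp
  qed
  then show ?thesis by simp
qed

lemma trigamma_sq_plus_tetragamma_minus_rational_bound_step:
  assumes x: "(x::real) > 0"
  shows "((Polygamma 1 x)^2 + Polygamma 2 x - rational_bound c x)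
      - ((Polygamma 1 (x + 1))^2 + Polygamma 2 (x + 1) - rational_bound c (x + 1))
    = 2 * Polygamma 1 (x + 1) / x^2 + 1/x^4 - 2/x^3 - rational_bound c x + rational_bound c (x + 1)"
proof -
  have "(a + 1/x^2)^2 + (b - 2/x^3) - r - (a^2 + b - r')
      = 2*a/x^2 + 1/x^4 - 2/x^3 - r + r'" for a b r r' :: real
    using x by (simp add: power2_sum field_simps power2_eq_square power4_eq_xxxx)
  then show ?thesis unfolding trigamma_recurrence[OF x] tetragamma_recurrence[OF x] .
qed

lemma trigamma_sq_plus_tetragamma_shift_tendsto_zero:
  assumes x: "(x::real) > 0"
  shows "(\<lambda>m. (Polygamma 1 (x + real m))^2 + Polygamma 2 (x + real m) - rational_bound c (x + real m))
    \<longlonglongrightarrow> 0"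
proof -
  have "(\<lambda>m. rational_bound c (x + real m)) \<longlonglongrightarrow> 0"
    unfolding rational_bound_def by real_asymp
  from tendsto_diff[OF tendsto_add[OF tendsto_power[OF Polygamma_shift_tendsto_zero[OF x, of 1], of 2]
      Polygamma_shift_tendsto_zero[OF x, of 2]] this]
  show ?thesis by simp
qed

lemma trigamma_sq_plus_tetragamma_less_rational_bound_4:
  assumes x: "(x::real) > 0"
  shows "(Polygamma 1 x)^2 + Polygamma 2 x < rational_bound 4 x"
proof -
  have "(Polygamma 1 x)^2 + Polygamma 2 x - rational_bound 4 x < 0"
  proof (rule neg_if_shift_increasing_tendsto_zero
      [where h = "\<lambda>y. (Polygamma 1 y)^2 + Polygamma 2 y - rational_bound 4 y", OF x _
       trigamma_sq_plus_tetragamma_shift_tendsto_zero[OF x]])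
    fix y :: real assume y: "y > 0"
    have "2 * Polygamma 1 (y + 1) / y^2 < 2 * trigamma_ub (y + 1) / y^2"
      using trigamma_less_ub[of "y + 1"] y by (intro divide_strict_right_mono) auto
    moreover have "0 < (16*y + 36*y^2 + 32*y^3) / (12*y^4*(y + 1)^4*(y + 2)^2)"
      using y by (simp add: add_pos_pos)
    then have "-(16*y + 36*y^2 + 32*y^3) / (12*y^4*(y + 1)^4*(y + 2)^2) < 0"
      by (simp only: minus_divide_left[symmetric] neg_less_0_iff_less)
    ultimately show "(Polygamma 1 y)^2 + Polygamma 2 y - rational_bound 4 y
        < (Polygamma 1 (y + 1))^2 + Polygamma 2 (y + 1) - rational_bound 4 (y + 1)"
      using trigamma_sq_plus_tetragamma_minus_rational_bound_step[OF y, of 4]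
        rational_bound_4_step_trigamma_ub[OF y] by linarith
  qed
  then show ?thesis by simp
qed

lemma rational_bound_0_less_trigamma_sq_plus_tetragamma:
  assumes x: "(x::real) > 0"
  shows "rational_bound 0 x < (Polygamma 1 x)^2 + Polygamma 2 x"
proof -
  have "rational_bound 0 x - ((Polygamma 1 x)^2 + Polygamma 2 x) < 0"
  proof (rule neg_if_shift_increasing_tendsto_zero
      [where h = "\<lambda>y. rational_bound 0 y - ((Polygamma 1 y)^2 + Polygamma 2 y)", OF x])
    fix y :: real assume y: "y > 0"
    have "2 * trigamma_lb (y + 1) / y^2 < 2 * Polygamma 1 (y + 1) / y^2"
      using trigamma_lb_less[of "y + 1"] y by (intro divide_strict_right_mono) auto
    moreover have "0 < (44*y^2 + 144*y^3 + 196*y^4 + 100*y^5) / (60*y^4*(y + 1)^5*(y + 2)^2)"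
      using y by (simp add: add_pos_pos)
    ultimately show "rational_bound 0 y - ((Polygamma 1 y)^2 + Polygamma 2 y)
        < rational_bound 0 (y + 1) - ((Polygamma 1 (y + 1))^2 + Polygamma 2 (y + 1))"
      using trigamma_sq_plus_tetragamma_minus_rational_bound_step[OF y, of 0]
        rational_bound_0_step_trigamma_lb[OF y] by linarith
  next
    show "(\<lambda>m. rational_bound 0 (x + real m)
        - ((Polygamma 1 (x + real m))^2 + Polygamma 2 (x + real m))) \<longlonglongrightarrow> 0"
      using tendsto_minus[OF trigamma_sq_plus_tetragamma_shift_tendsto_zero[OF x, of 0]] by simp
  qed
  then show ?thesis by simp
qed

lemma rational_bound_mono: "(x::real) > 0 \<Longrightarrow> a \<le> b \<Longrightarrow> rational_bound a x \<le> rational_bound b x"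
  unfolding rational_bound_def by (intro divide_right_mono) (auto intro: mult_right_mono)

text \<open>\<open>bound_coeff x U\<close> is the \<open>c\<close> with \<open>rational_bound c x = U\<close>.\<close>

definition bound_coeff :: "real \<Rightarrow> real \<Rightarrow> real" where
  "bound_coeff x U = (12 * x^4 * (x + 1)^2 * U - x^2 - 12) / x"

lemma rational_bound_less_iff:
  assumes x: "(x::real) > 0"
  shows "rational_bound c x < U \<longleftrightarrow> c < bound_coeff x U"
    and "U < rational_bound c x \<longleftrightarrow> bound_coeff x U < c"
proof -
  have D: "12 * x^4 * (x + 1)^2 > 0" using x by simp
  show "rational_bound c x < U \<longleftrightarrow> c < bound_coeff x U"
    using D x unfolding rational_bound_def bound_coeff_def
    by (simp add: divide_less_eq less_divide_eq mult.commute algebra_simps)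
  show "U < rational_bound c x \<longleftrightarrow> bound_coeff x U < c"
    using D x unfolding rational_bound_def bound_coeff_def
    by (simp add: divide_less_eq less_divide_eq mult.commute algebra_simps)
qed

lemma trigamma_sq_plus_tetragamma_less_shifted_bound:
  assumes x: "(x::real) > 0"
  shows "(Polygamma 1 x)^2 + Polygamma 2 x < (1/x^2 + trigamma_ub (x + 1))^2 - 2/x^3"
proof -
  have "x \<notin> \<int>\<^sub>\<le>\<^sub>0" using x nonpos_Ints_nonpos by force
  then have "0 < Polygamma 1 x" using Polygamma_real_odd_pos[of x 1] by simp
  moreover have "Polygamma 1 x < 1/x^2 + trigamma_ub (x + 1)"
    using trigamma_recurrence[OF x] trigamma_less_ub[of "x + 1"] x by simp
  ultimately have "(Polygamma 1 x)^2 < (1/x^2 + trigamma_ub (x + 1))^2"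
    by (intro power_strict_mono) auto
  moreover have "Polygamma 2 x < - 2/x^3"
    using tetragamma_recurrence[OF x] Polygamma_real_even_neg[of "x + 1" 2] x by simp
  ultimately show ?thesis by simp
qed

lemma trigamma_sq_plus_tetragamma_greater_lb:
  assumes x: "(x::real) > 0" and pos: "trigamma_lb x > 0"
  shows "(trigamma_lb x)^2 + tetragamma_lb x < (Polygamma 1 x)^2 + Polygamma 2 x"
proof -
  have "(trigamma_lb x)^2 < (Polygamma 1 x)^2"
    using pos trigamma_lb_less[OF x] by (intro power_strict_mono) auto
  with tetragamma_lb_less[OF x] show ?thesis by simp
qed

lemma ex_trigamma_sq_plus_tetragamma_less_rational_bound:
  assumes "\<mu> > 0"
  shows "\<exists>x>0. (Polygamma 1 x)^2 + Polygamma 2 x < rational_bound \<mu> x"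
proof -
  let ?U = "\<lambda>x. (1/x^2 + trigamma_ub (x + 1))^2 - 2/x^3"
  have "((\<lambda>x. bound_coeff x (?U x)) \<longlongrightarrow> 0) (at_right 0)"
    unfolding bound_coeff_def trigamma_ub_def by real_asymp
  then have "eventually (\<lambda>x. bound_coeff x (?U x) < \<mu> \<and> x > 0) (at_right 0)"
    using assms by (intro eventually_conj order_tendstoD(2) eventually_at_right_less)
  then obtain x where "bound_coeff x (?U x) < \<mu>" and x: "x > 0"
    using eventually_happens'[OF trivial_limit_at_right_real] by blast
  then have "?U x < rational_bound \<mu> x" by (simp add: rational_bound_less_iff(2))
  with trigamma_sq_plus_tetragamma_less_shifted_bound[OF x] x show ?thesis by force
qed

lemma ex_rational_bound_less_trigamma_sq_plus_tetragamma:
  assumes "\<nu> < 4"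
  shows "\<exists>x>0. rational_bound \<nu> x < (Polygamma 1 x)^2 + Polygamma 2 x"
proof -
  let ?L = "\<lambda>x. (trigamma_lb x)^2 + tetragamma_lb x"
  have "eventually (\<lambda>x. \<nu> < bound_coeff x (?L x) \<and> trigamma_lb x > 0 \<and> x > 0) at_top"
  proof (intro eventually_conj)
    have "((\<lambda>x. bound_coeff x (?L x)) \<longlongrightarrow> 4) at_top"
      unfolding bound_coeff_def trigamma_lb_def trigamma_ub_def tetragamma_lb_def by real_asymp
    from order_tendstoD(1)[OF this assms] show "eventually (\<lambda>x. \<nu> < bound_coeff x (?L x)) at_top" .
    show "eventually (\<lambda>x. trigamma_lb x > 0) at_top"
      unfolding trigamma_lb_def trigamma_ub_def by real_asymp
  qed (rule eventually_gt_at_top)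
  then obtain x where "\<nu> < bound_coeff x (?L x)" and pos: "trigamma_lb x > 0" and x: "x > 0"
    using eventually_happens'[OF trivial_limit_at_top_linorder] by blast
  then have "rational_bound \<nu> x < ?L x" by (simp add: rational_bound_less_iff(1))
  with trigamma_sq_plus_tetragamma_greater_lb[OF x pos] x show ?thesis by force
qed

theorem theorem1p1:
  fixes \<mu> \<nu> :: real
  shows "(\<forall>x::real. x > 0 \<longrightarrow>
            (x^2 + \<mu> * x + 12) / (12 * x^4 * (x + 1)^2) < (Polygamma 1 x)^2 + Polygamma 2 x \<and>
            (Polygamma 1 x)^2 + Polygamma 2 x < (x^2 + \<nu> * x + 12) / (12 * x^4 * (x + 1)^2))
         \<longleftrightarrow> (\<mu> \<le> 0 \<and> \<nu> \<ge> 4)"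
  unfolding rational_bound_def[symmetric]
proof safe
  assume "\<forall>x>0. rational_bound \<mu> x < (Polygamma 1 x)^2 + Polygamma 2 x
    \<and> (Polygamma 1 x)^2 + Polygamma 2 x < rational_bound \<nu> x"
  then show "\<mu> \<le> 0" and "\<nu> \<ge> 4"
    using ex_trigamma_sq_plus_tetragamma_less_rational_bound[of \<mu>]
      ex_rational_bound_less_trigamma_sq_plus_tetragamma[of \<nu>]
    by (force simp: not_le)+
next
  fix x :: real assume "\<mu> \<le> 0" "4 \<le> \<nu>" "x > 0"
  then show "rational_bound \<mu> x < (Polygamma 1 x)^2 + Polygamma 2 x"
    and "(Polygamma 1 x)^2 + Polygamma 2 x < rational_bound \<nu> x"
    using rational_bound_mono rational_bound_0_less_trigamma_sq_plus_tetragamma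
      trigamma_sq_plus_tetragamma_less_rational_bound_4
    by (meson le_less_trans less_le_trans)+
qed

end
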